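(* Let $d=2b$ be even, $d\geq 4$, and let $q\geq b$. Then every half-edge of every $(2q,2b)$-branching mobile has even weight. Similarly, the weights of the half-edges in the minimal pseudo $d/(d-2)$-orientation of any $2q$-annular $2b$-angulation of girth $2b$ are even.
   Context: A mobile is a plane tree whose vertices are black or white (not necessarily properly), black vertices possibly carrying dangling half-edges (buds). An $\mathbb N$-mobile gives each non-bud half-edge a weight in $\{0,1,2,\dots\}$, positive if incident to a white vertex, zero if incident to a black vertex; vertex weight = sum of weights of incident non-bud half-edges; edge weight = sum of its two half-edge weights; black-vertex degree counts buds. For $p\geq d\geq 3$, a $(p,d)$-branching mobile is an $\mathbb N$-mobile such that every edge has weight $d-2$; every black vertex has degree $d$ except one black vertex $s$ (special vertex) of degree $p$ carrying no bud; every white vertex not adjacent to $s$ has weight $d$, and the weights of the neighbors of $s$ sum to $pd-p-d$. A map is a connected finite graph embedded in the oriented sphere up to orientation-preserving homeomorphism; girth is the minimal cycle length. A $p$-annular $d$-angulation is a map with a marked face (boundary face) of degree $p$ with simple contour, all other faces of degree $d$, and a marked root-face distinct from the boundary face. A biorientation assigns to each half-edge a direction (ingoing/outgoing); an edge is $i$-way if $i$ of its half-edges are ingoing; directed paths follow 2-way edges or 1-way edges toward the ingoing half-edge; a circuit (simple closed directed path) is counterclockwise if the root-face is on its right; minimal = no counterclockwise circuit. An $\mathbb N$-biorientation has half-edge weights in $\{0,1,2,\dots\}$, positive on ingoing, zero on outgoing half-edges. A pseudo $d/(d-2)$-orientation is an $\mathbb N$-biorientation with every edge of weight $d-2$, every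 vertex not incident to the boundary face of weight $d$ (vertex weight = sum of weights of incident ingoing half-edges), and the boundary face contour a directed cycle of 1-way edges each with the boundary face on its right. A $p$-annular $d$-angulation of girth $d$ has a unique minimal one. *)

theory Defs
  imports "HOL-Combinatorics.Permutations"
begin

text \<open>Half-edges (darts) form a finite set D. alpha is an involution on D pairing the two
  half-edges of an edge (for mobiles, its fixed points are exactly the buds).
  sigma is the counterclockwise rotation of half-edges around their vertex; vertices are
  sigma-orbits, and faces of a map are orbits of sigma o alpha. With this convention the
  face containing a dart x is the face lying on the right of x when x is traversed from
  its own vertex to the vertex of alpha x.\<close>

definition orb :: "('a \<Rightarrow> 'a) \<Rightarrow> 'a \<Rightarrow> 'a set" where
  "orb f x = {(f ^^ n) x | n. True}"

definition verts :: "'a set \<Rightarrow> ('a \<Rightarrow> 'a) \<Rightarrow> 'a set set" where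
  "verts D sigma = orb sigma ` D"

definition face :: "('a \<Rightarrow> 'a) \<Rightarrow> ('a \<Rightarrow> 'a) \<Rightarrow> 'a \<Rightarrow> 'a set" where
  "face alpha sigma x = orb (sigma \<circ> alpha) x"

definition faces :: "'a set \<Rightarrow> ('a \<Rightarrow> 'a) \<Rightarrow> ('a \<Rightarrow> 'a) \<Rightarrow> 'a set set" where
  "faces D alpha sigma = face alpha sigma ` D"

definition cmap_base :: "'a set \<Rightarrow> ('a \<Rightarrow> 'a) \<Rightarrow> ('a \<Rightarrow> 'a) \<Rightarrow> bool" where
  "cmap_base D alpha sigma \<longleftrightarrow>
     finite D \<and> D \<noteq> {} \<and> alpha permutes D \<and> sigma permutes D \<and>
     (\<forall>x\<in>D. alpha (alpha x) = x) \<and>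
     (\<forall>x\<in>D. \<forall>y\<in>D. (x, y) \<in> ({(z, alpha z) | z. z \<in> D} \<union> {(z, sigma z) | z. z \<in> D})\<^sup>*)"

definition is_map :: "'a set \<Rightarrow> ('a \<Rightarrow> 'a) \<Rightarrow> ('a \<Rightarrow> 'a) \<Rightarrow> bool" where
  "is_map D alpha sigma \<longleftrightarrow>
     cmap_base D alpha sigma \<and> (\<forall>x\<in>D. alpha x \<noteq> x) \<and>
     int (card (verts D sigma)) - int (card D div 2) + int (card (faces D alpha sigma)) = 2"

definition mvwt :: "('a \<Rightarrow> 'a) \<Rightarrow> ('a \<Rightarrow> nat) \<Rightarrow> 'a set \<Rightarrow> nat" where
  "mvwt alpha w v = (\<Sum>x\<in>{x\<in>v. alpha x \<noteq> x}. w x)"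

definition branching_mobile ::
  "nat \<Rightarrow> nat \<Rightarrow> 'a set \<Rightarrow> ('a \<Rightarrow> 'a) \<Rightarrow> ('a \<Rightarrow> 'a) \<Rightarrow> ('a set \<Rightarrow> bool) \<Rightarrow> ('a \<Rightarrow> nat) \<Rightarrow> bool" where
  "branching_mobile p d D alpha sigma black w \<longleftrightarrow>
     d \<le> p \<and> 3 \<le> d \<and> cmap_base D alpha sigma \<and>
     \<comment> \<open>plane tree: connected with #vertices = #edges + 1\<close>
     card (verts D sigma) = card {x\<in>D. alpha x \<noteq> x} div 2 + 1 \<and>
     \<comment> \<open>buds only at black vertices\<close>
     (\<forall>x\<in>D. alpha x = x \<longrightarrow> black (orb sigma x)) \<and>
     \<comment> \<open>N-mobile weights\<close>
     (\<forall>x\<in>D. alpha x \<noteq> x \<longrightarrow>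
        (black (orb sigma x) \<longrightarrow> w x = 0) \<and> (\<not> black (orb sigma x) \<longrightarrow> 0 < w x)) \<and>
     \<comment> \<open>every edge has weight d - 2\<close>
     (\<forall>x\<in>D. alpha x \<noteq> x \<longrightarrow> w x + w (alpha x) = d - 2) \<and>
     (\<exists>s\<in>verts D sigma. black s \<and> card s = p \<and> (\<forall>x\<in>s. alpha x \<noteq> x) \<and>
        (\<forall>v\<in>verts D sigma. black v \<and> v \<noteq> s \<longrightarrow> card v = d) \<and>
        (\<forall>v\<in>verts D sigma. \<not> black v \<and> \<not> (\<exists>x\<in>v. alpha x \<noteq> x \<and> alpha x \<in> s)
             \<longrightarrow> mvwt alpha w v = d) \<and>
        (\<Sum>v\<in>{orb sigma (alpha x) | x. x \<in> s}. mvwt alpha w v) = p * d - p - d)"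

text \<open>p-annular d-angulation with boundary face (face of bd) and root face (face of rt).\<close>
definition annular_angulation ::
  "nat \<Rightarrow> nat \<Rightarrow> 'a set \<Rightarrow> ('a \<Rightarrow> 'a) \<Rightarrow> ('a \<Rightarrow> 'a) \<Rightarrow> 'a \<Rightarrow> 'a \<Rightarrow> bool" where
  "annular_angulation p d D alpha sigma bd rt \<longleftrightarrow>
     is_map D alpha sigma \<and> bd \<in> D \<and> rt \<in> D \<and>
     card (face alpha sigma bd) = p \<and>
     inj_on (orb sigma) (face alpha sigma bd) \<and>
     (\<forall>x\<in>D. face alpha sigma x \<noteq> face alpha sigma bd \<longrightarrow> card (face alpha sigma x) = d) \<and>
     face alpha sigma rt \<noteq> face alpha sigma bd"

text \<open>A cycle: a closed walk of darts (dart x goes from the vertex of x to the vertex of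
  alpha x) with pairwise distinct vertices and pairwise distinct edges.\<close>
definition is_cycle :: "'a set \<Rightarrow> ('a \<Rightarrow> 'a) \<Rightarrow> ('a \<Rightarrow> 'a) \<Rightarrow> 'a list \<Rightarrow> bool" where
  "is_cycle D alpha sigma c \<longleftrightarrow>
     c \<noteq> [] \<and> set c \<subseteq> D \<and>
     (\<forall>i<length c. orb sigma (alpha (c ! i)) = orb sigma (c ! (Suc i mod length c))) \<and>
     distinct (map (orb sigma) c) \<and> distinct (map (\<lambda>x. {x, alpha x}) c)"

definition has_girth :: "'a set \<Rightarrow> ('a \<Rightarrow> 'a) \<Rightarrow> ('a \<Rightarrow> 'a) \<Rightarrow> nat \<Rightarrow> bool" where
  "has_girth D alpha sigma g \<longleftrightarrow>
     (\<exists>c. is_cycle D alpha sigma c \<and> length c = g) \<and>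
     (\<forall>c. is_cycle D alpha sigma c \<longrightarrow> g \<le> length c)"

definition pseudo_orientation ::
  "nat \<Rightarrow> 'a set \<Rightarrow> ('a \<Rightarrow> 'a) \<Rightarrow> ('a \<Rightarrow> 'a) \<Rightarrow> 'a \<Rightarrow> ('a \<Rightarrow> bool) \<Rightarrow> ('a \<Rightarrow> nat) \<Rightarrow> bool" where
  "pseudo_orientation d D alpha sigma bd inn w \<longleftrightarrow>
     (\<forall>x\<in>D. (inn x \<longrightarrow> 0 < w x) \<and> (\<not> inn x \<longrightarrow> w x = 0)) \<and>
     (\<forall>x\<in>D. w x + w (alpha x) = d - 2) \<and>
     (\<forall>v\<in>verts D sigma. v \<notin> orb sigma ` face alpha sigma bd \<longrightarrow>
        (\<Sum>x\<in>{x\<in>v. inn x}. w x) = d) \<and>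
     (\<forall>x\<in>face alpha sigma bd. \<not> inn x \<and> inn (alpha x))"

text \<open>Circuit: simple closed directed path; dart x can be traversed iff alpha x is ingoing.\<close>
definition is_circuit ::
  "'a set \<Rightarrow> ('a \<Rightarrow> 'a) \<Rightarrow> ('a \<Rightarrow> 'a) \<Rightarrow> ('a \<Rightarrow> bool) \<Rightarrow> 'a list \<Rightarrow> bool" where
  "is_circuit D alpha sigma inn c \<longleftrightarrow>
     is_cycle D alpha sigma c \<and> (\<forall>x\<in>set c. inn (alpha x))"

definition right_faces :: "'a set \<Rightarrow> ('a \<Rightarrow> 'a) \<Rightarrow> ('a \<Rightarrow> 'a) \<Rightarrow> 'a list \<Rightarrow> 'a set set" where
  "right_faces D alpha sigma c =
     {f. \<exists>x\<in>set c. (face alpha sigma x, f) \<in>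
        {(face alpha sigma y, face alpha sigma (alpha y)) | y.
            y \<in> D \<and> {y, alpha y} \<notin> (\<lambda>z. {z, alpha z}) ` set c}\<^sup>*}"

definition minimal_orientation ::
  "'a set \<Rightarrow> ('a \<Rightarrow> 'a) \<Rightarrow> ('a \<Rightarrow> 'a) \<Rightarrow> 'a \<Rightarrow> ('a \<Rightarrow> bool) \<Rightarrow> bool" where
  "minimal_orientation D alpha sigma rt inn \<longleftrightarrow>
     \<not> (\<exists>c. is_circuit D alpha sigma inn c \<and> face alpha sigma rt \<in> right_faces D alpha sigma c)"

end

theory Submission
  imports Defs "HOL-Combinatorics.Orbits"
begin

text \<open>Call a half-edge odd if its weight is odd. Every edge has the even weight d - 2, so
  odd half-edges come in whole edges, and every vertex whose weight is prescribed to be d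
  carries an even number of them.

  In a mobile, black half-edges have weight 0, so the special vertex s carries no odd
  half-edge. Root the tree at s: the deepest odd edge ends at a vertex with exactly one odd
  half-edge, hence of odd weight, hence a neighbour of s; but then its parent edge comes
  from s and is not odd.

  In a pseudo-orientation, odd half-edges are ingoing, so odd edges are 2-way and avoid the
  boundary face. A longest path of odd edges either closes into a cycle or joins two
  boundary vertices. A 2-way cycle, traversed both ways, gives two circuits; a 2-way chord
  of the boundary, closed by either boundary arc, also gives two circuits. In both cases
  the faces on the right of the two circuits cover the map, so one of the circuits has the
  root face on its right, contradicting minimality.\<close>

lemma orb_self: "x \<in> orb f x"
  unfolding orb_def by (auto intro: exI[of _ 0])

lemma orb_eq_orbit: "permutation f \<Longrightarrow> orb f x = orbit f x"
  by (simp add: orb_def orbit_altdef_permutation)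

lemma orb_subset: "f permutes D \<Longrightarrow> x \<in> D \<Longrightarrow> orb f x \<subseteq> D"
  unfolding orb_def using permutes_in_funpow_image by fastforce

lemma orb_eq:
  assumes "permutation f" "y \<in> orb f x"
  shows "orb f y = orb f x"
proof -
  have "x \<in> orbit f x" using assms(1) by (rule permutation_self_in_orbit)
  moreover have "y \<in> orbit f x" using assms orb_eq_orbit by metis
  ultimately have "x \<in> orbit f y" by (rule orbit_swap)
  then have "orbit f y = orbit f x"
    using \<open>y \<in> orbit f x\<close> orbit_trans[of _ f y x] orbit_trans[of _ f x y] by blast
  then show ?thesis using assms(1) by (simp add: orb_eq_orbit)
qed

lemma orb_apply: "permutation f \<Longrightarrow> orb f (f x) = orb f x"
  by (rule orb_eq) (auto simp: orb_def intro: exI[of _ 1])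

lemma orb_enumeration:
  assumes "permutation f"
  obtains n where "0 < n" "(f ^^ n) x = x"
    "inj_on (\<lambda>j. (f ^^ j) x) {0..<n}" "orb f x = (\<lambda>j. (f ^^ j) x) ` {0..<n}"
proof
  have x: "x \<in> orbit f x" using assms by (rule permutation_self_in_orbit)
  show "0 < funpow_dist1 f x x" by simp
  show "(f ^^ funpow_dist1 f x x) x = x" using funpow_dist1_prop[OF x] .
  show "inj_on (\<lambda>j. (f ^^ j) x) {0..<funpow_dist1 f x x}" using inj_on_funpow_dist1[OF x] .
  show "orb f x = (\<lambda>j. (f ^^ j) x) ` {0..<funpow_dist1 f x x}"
    using orbit_conv_funpow_dist1[OF x] orb_eq_orbit[OF assms] by simp
qed

lemma card_eq_twice_card_edges:
  assumes "finite N" "\<forall>x\<in>N. alpha x \<in> N \<and> alpha x \<noteq> x \<and> alpha (alpha x) = x"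
  shows "card N = 2 * card ((\<lambda>x. {x, alpha x}) ` N)"
proof -
  let ?C = "(\<lambda>x. {x, alpha x}) ` N"
  have same_edge: "\<And>x z. x \<in> N \<Longrightarrow> z \<in> {x, alpha x} \<Longrightarrow> {x, alpha x} = {z, alpha z}"
    using assms(2) by auto
  have "pairwise disjnt ?C"
  proof (rule pairwiseI)
    fix A B assume "A \<in> ?C" "B \<in> ?C" "A \<noteq> B"
    then show "disjnt A B" unfolding disjnt_def using same_edge by blast
  qed
  then have "card (\<Union>?C) = sum card ?C"
    by (rule card_Union_disjoint) (use assms(1) in auto)
  also have "\<dots> = sum (\<lambda>_. 2) ?C"
    by (rule sum.cong) (use assms(2) in auto)
  also have "\<Union>?C = N" using assms(2) by auto
  finally show ?thesis by simp
qed

lemma all_nth_mod_iff_successively: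
  assumes "c \<noteq> []"
  shows "(\<forall>i<length c. P (c ! i) (c ! (Suc i mod length c))) \<longleftrightarrow>
         successively P c \<and> P (last c) (hd c)"
proof
  assume H: "\<forall>i<length c. P (c ! i) (c ! (Suc i mod length c))"
  have "successively P c"
    unfolding successively_conv_nth using H by (metis Suc_lessD mod_less)
  moreover have "P (last c) (hd c)"
    using H[rule_format, of "length c - 1"] assms by (simp add: last_conv_nth hd_conv_nth)
  ultimately show "successively P c \<and> P (last c) (hd c)" by blast
next
  assume H: "successively P c \<and> P (last c) (hd c)"
  show "\<forall>i<length c. P (c ! i) (c ! (Suc i mod length c))"
  proof (intro allI impI)
    fix i assume i: "i < length c"
    show "P (c ! i) (c ! (Suc i mod length c))"
    proof (cases "Suc i < length c")
      case True
      then show ?thesis using H successively_nth[of P c i] by simp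
    next
      case False
      then have "Suc i = length c" using i by simp
      then have "i = length c - 1" "Suc i mod length c = 0" by simp_all
      then show ?thesis using H assms by (simp add: last_conv_nth hd_conv_nth)
    qed
  qed
qed

lemma successively_take_drop:
  assumes "successively P xs"
  shows "successively P (take k xs)" "successively P (drop k xs)"
  using assms successively_append_iff[of P "take k xs" "drop k xs"] by simp_all

section \<open>Combinatorial maps\<close>

locale dart_system =
  fixes alpha sigma :: "'a \<Rightarrow> 'a"
begin

abbreviation vertex :: "'a \<Rightarrow> 'a set" where "vertex x \<equiv> orb sigma x"

abbreviation edge :: "'a \<Rightarrow> 'a set" where "edge x \<equiv> {x, alpha x}"

abbreviation leads_to :: "'a \<Rightarrow> 'a \<Rightarrow> bool" where "leads_to x y \<equiv> vertex (alpha x) = vertex y"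

lemma edge_eq_iff: "edge z = edge y \<longleftrightarrow> z = y \<or> (z = alpha y \<and> alpha z = y)"
  by (auto simp: doubleton_eq_iff)

lemma is_cycle_iff:
  "is_cycle D alpha sigma c \<longleftrightarrow>
     c \<noteq> [] \<and> set c \<subseteq> D \<and> successively leads_to c \<and> leads_to (last c) (hd c) \<and>
     distinct (map vertex c) \<and> distinct (map edge c)"
  unfolding is_cycle_def using all_nth_mod_iff_successively[of c leads_to] by auto

text \<open>The hypothesis on the end vertex excludes the path [x, alpha x], which visits two
  distinct vertices but uses one edge twice.\<close>

lemma distinct_edges_of_path:
  assumes "xs \<noteq> []" "successively leads_to xs" "distinct (map vertex xs)"
    "vertex (alpha (last xs)) \<notin> vertex ` set xs"
  shows "distinct (map edge xs)"
  using assms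
proof (induction xs)
  case Nil
  then show ?case by simp
next
  case (Cons x ys)
  show ?case
  proof (cases "ys = []")
    case True
    then show ?thesis by simp
  next
    case False
    then obtain y zs where ys: "ys = y # zs" by (cases ys) auto
    have IH: "distinct (map edge ys)"
      using Cons.IH False Cons.prems by (auto simp: successively_Cons)
    have x_new: "vertex x \<notin> vertex ` set ys" and y_new: "vertex y \<notin> vertex ` set zs"
      using Cons.prems(3) ys by auto
    have xy: "leads_to x y" using Cons.prems(2) ys by simp
    have "edge x \<notin> edge ` set ys"
    proof
      assume "edge x \<in> edge ` set ys"
      then obtain u where u: "u \<in> set ys" "edge x = edge u" by blast
      then consider "x = u" | "x = alpha u" "alpha x = u" by (auto simp: edge_eq_iff)
      then show False
      proof cases
        case 1
        then show False using x_new u(1) by auto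
      next
        case 2
        then have "vertex u = vertex y" using xy by simp
        then have "u = y" using u(1) y_new ys by auto
        show False
        proof (cases zs)
          case Nil
          then show False using Cons.prems(4) ys 2 \<open>u = y\<close> by simp
        next
          case (Cons z zs')
          then have "leads_to y z" using Cons.prems(2) ys by simp
          then show False using 2 \<open>u = y\<close> x_new ys Cons by auto
        qed
      qed
    qed
    then show ?thesis using IH by simp
  qed
qed

lemma distinct_edges_of_cycle:
  assumes "c \<noteq> []" "successively leads_to c" "leads_to (last c) (hd c)"
    "distinct (map vertex c)" "length c = 2 \<Longrightarrow> c ! 1 \<noteq> alpha (c ! 0)"
  shows "distinct (map edge c)"
proof -
  obtain bs l where c: "c = bs @ [l]" using assms(1) by (metis append_butlast_last_id)
  show ?thesis
  proof (cases bs)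
    case Nil
    then show ?thesis using c by simp
  next
    case (Cons y zs)
    have "bs \<noteq> []" using Cons by simp
    then have sb: "successively leads_to bs" and lb: "leads_to (last bs) l"
      using assms(2) unfolding c successively_append_iff by simp_all
    have db: "distinct (map vertex bs)" and l_new: "vertex l \<notin> vertex ` set bs"
      using assms(4) c by auto
    have "distinct (map edge bs)"
      using distinct_edges_of_path[OF _ sb db] Cons lb l_new by simp
    moreover have "edge l \<notin> edge ` set bs"
    proof
      assume "edge l \<in> edge ` set bs"
      then obtain u where u: "u \<in> set bs" "edge l = edge u" by blast
      then consider "l = u" | "l = alpha u" "alpha l = u" by (auto simp: edge_eq_iff)
      then show False
      proof cases
        case 1
        then show False using l_new u(1) by auto
      next
        case 2
        have "vertex u = vertex y" using assms(3) c Cons 2 by simp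
        then have "u = y" using u(1) db Cons by (auto simp: inj_on_def)
        show False
        proof (cases zs)
          case Nil
          then show False using assms(5) c \<open>bs = y # zs\<close> 2 \<open>u = y\<close> by simp
        next
          case (Cons z zs')
          then have "leads_to y z" using sb \<open>bs = y # zs\<close> by simp
          then show False using 2 \<open>u = y\<close> l_new \<open>bs = y # zs\<close> Cons by auto
        qed
      qed
    qed
    ultimately show ?thesis using c by simp
  qed
qed

lemma successively_leads_to_rev:
  assumes "successively leads_to xs" "\<forall>x\<in>set xs. alpha (alpha x) = x"
  shows "successively leads_to (rev (map alpha xs))"
  unfolding successively_rev successively_map
  by (rule successively_mono[OF assms(1)]) (use assms(2) in auto)

lemma map_vertex_alpha:
  assumes "successively leads_to xs" "xs \<noteq> []"
  shows "map (\<lambda>x. vertex (alpha x)) xs = tl (map vertex xs) @ [vertex (alpha (last xs))]"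
  using assms
proof (induction xs)
  case Nil
  then show ?case by simp
next
  case (Cons x ys)
  then show ?case by (cases ys) auto
qed

lemma map_vertex_rev:
  assumes "successively leads_to xs" "xs \<noteq> []" "\<forall>x\<in>set xs. alpha (alpha x) = x"
  shows "map vertex (rev (map alpha xs)) = vertex (alpha (last xs)) # rev (map vertex (tl xs))"
proof -
  have "map vertex (rev (map alpha xs)) = rev (map (\<lambda>x. vertex (alpha x)) xs)"
    by (simp add: rev_map)
  then show ?thesis using map_vertex_alpha[OF assms(1,2)] by (simp add: map_tl)
qed

lemma map_edge_rev:
  "\<forall>x\<in>set xs. alpha (alpha x) = x \<Longrightarrow> map edge (rev (map alpha xs)) = rev (map edge xs)"
  by (induction xs) (auto simp: insert_commute)

end

locale comb_map = dart_system +
  fixes D :: "'a set"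
  assumes cmap_base: "cmap_base D alpha sigma"
begin

lemma finite_darts: "finite D"
  and alpha_permutes: "alpha permutes D"
  and sigma_permutes: "sigma permutes D"
  and alpha_alpha [simp]: "x \<in> D \<Longrightarrow> alpha (alpha x) = x"
  and connected: "x \<in> D \<Longrightarrow> y \<in> D \<Longrightarrow>
        (x, y) \<in> ({(z, alpha z) | z. z \<in> D} \<union> {(z, sigma z) | z. z \<in> D})\<^sup>*"
  using cmap_base unfolding cmap_base_def by blast+

lemma alpha_in [simp]: "x \<in> D \<Longrightarrow> alpha x \<in> D"
  using permutes_in_image[OF alpha_permutes] by simp

lemma permutation_sigma: "permutation sigma"
  unfolding permutation_permutes using finite_darts sigma_permutes by blast

lemma vertex_subset: "x \<in> D \<Longrightarrow> vertex x \<subseteq> D"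
  using orb_subset[OF sigma_permutes] .

lemma vertex_eq: "y \<in> vertex x \<Longrightarrow> vertex y = vertex x"
  using orb_eq[OF permutation_sigma] .

lemma permutation_face_step: "permutation (sigma \<circ> alpha)"
  unfolding permutation_permutes
  using finite_darts permutes_compose[OF alpha_permutes sigma_permutes] by blast

lemma face_subset: "x \<in> D \<Longrightarrow> face alpha sigma x \<subseteq> D"
  unfolding face_def using orb_subset[OF permutes_compose[OF alpha_permutes sigma_permutes]] .

lemma face_eq: "y \<in> face alpha sigma x \<Longrightarrow> face alpha sigma y = face alpha sigma x"
  unfolding face_def using orb_eq[OF permutation_face_step] .

lemma face_sigma: "x \<in> D \<Longrightarrow> face alpha sigma (sigma x) = face alpha sigma (alpha x)"
  unfolding face_def using orb_apply[OF permutation_face_step, of "alpha x"] by simp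

lemma leads_to_face_step: "leads_to x ((sigma \<circ> alpha) x)"
  using orb_apply[OF permutation_sigma] by simp

lemma face_contour:
  assumes "y0 \<in> D"
  obtains Y where "Y \<noteq> []" "hd Y = y0" "distinct Y" "set Y = face alpha sigma y0"
    "successively leads_to Y" "leads_to (last Y) (hd Y)"
proof -
  let ?f = "sigma \<circ> alpha"
  obtain n where n: "0 < n" "(?f ^^ n) y0 = y0" "inj_on (\<lambda>j. (?f ^^ j) y0) {0..<n}"
      "orb ?f y0 = (\<lambda>j. (?f ^^ j) y0) ` {0..<n}"
    using orb_enumeration[OF permutation_face_step] by metis
  define Y where "Y = map (\<lambda>j. (?f ^^ j) y0) [0..<n]"
  have Y_nth: "\<And>j. j < n \<Longrightarrow> Y ! j = (?f ^^ j) y0" unfolding Y_def by simp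
  have len: "length Y = n" unfolding Y_def by simp
  show ?thesis
  proof
    show "Y \<noteq> []" using len n(1) by auto
    show "hd Y = y0" using n(1) unfolding Y_def by (simp add: hd_map upt_conv_Cons)
    show "distinct Y" unfolding Y_def using n(3) by (simp add: distinct_map)
    show "set Y = face alpha sigma y0" unfolding Y_def face_def using n(4) by simp
    show "successively leads_to Y"
      unfolding successively_conv_nth
    proof (intro allI impI)
      fix j assume "Suc j < length Y"
      then have "Y ! Suc j = ?f (Y ! j)" using Y_nth len by simp
      then show "leads_to (Y ! j) (Y ! Suc j)" using leads_to_face_step by metis
    qed
    obtain m where m: "n = Suc m" using n(1) not0_implies_Suc by blast
    then have "last Y = (?f ^^ m) y0"
      using Y_nth len \<open>Y \<noteq> []\<close> by (simp add: last_conv_nth)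
    then have "?f (last Y) = hd Y" using n(2) m \<open>hd Y = y0\<close> by simp
    then show "leads_to (last Y) (hd Y)" using leads_to_face_step by metis
  qed
qed

lemma faces_closed_across_edges:
  assumes "z0 \<in> D" "face alpha sigma z0 \<in> R"
    and closed: "\<And>z. z \<in> D \<Longrightarrow> face alpha sigma z \<in> R \<Longrightarrow> face alpha sigma (alpha z) \<in> R"
    and "z \<in> D"
  shows "face alpha sigma z \<in> R"
  using connected[OF assms(1,4)]
proof (induction rule: rtrancl_induct)
  case base
  show ?case using assms(2) .
next
  case (step y z)
  then show ?case using closed face_sigma by auto
qed

lemma edge_in_edges_iff: "z \<in> D \<Longrightarrow> edge z \<in> edge ` X \<longleftrightarrow> z \<in> X \<or> alpha z \<in> X"
  by (auto simp: edge_eq_iff insert_commute intro: image_eqI[of _ edge "alpha z"])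

lemma right_faces_start: "x \<in> set c \<Longrightarrow> face alpha sigma x \<in> right_faces D alpha sigma c"
  unfolding right_faces_def by blast

lemma right_faces_step:
  assumes "face alpha sigma z \<in> right_faces D alpha sigma c" "z \<in> D"
    "z \<notin> set c" "alpha z \<notin> set c"
  shows "face alpha sigma (alpha z) \<in> right_faces D alpha sigma c"
proof -
  let ?cross = "{(face alpha sigma y, face alpha sigma (alpha y)) | y.
            y \<in> D \<and> edge y \<notin> edge ` set c}"
  obtain x where x: "x \<in> set c" "(face alpha sigma x, face alpha sigma z) \<in> ?cross\<^sup>*"
    using assms(1) unfolding right_faces_def by blast
  have "edge z \<notin> edge ` set c"
    using assms(2-4) edge_in_edges_iff by blast
  then have "(face alpha sigma z, face alpha sigma (alpha z)) \<in> ?cross" using assms(2) by blast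
  with x(2) have "(face alpha sigma x, face alpha sigma (alpha z)) \<in> ?cross\<^sup>*"
    by (rule rtrancl.rtrancl_into_rtrancl)
  then show ?thesis unfolding right_faces_def using x(1) by blast
qed

lemma is_cycle_rev:
  assumes "is_cycle D alpha sigma c"
  shows "is_cycle D alpha sigma (rev (map alpha c))"
proof -
  let ?r = "rev (map alpha c)"
  have c: "c \<noteq> []" "set c \<subseteq> D" "successively leads_to c" "leads_to (last c) (hd c)"
    "distinct (map vertex c)" "distinct (map edge c)"
    using assms unfolding is_cycle_iff by blast+
  have inv: "\<forall>x\<in>set c. alpha (alpha x) = x" using c(2) by auto
  have "map vertex c = vertex (hd c) # map vertex (tl c)" using c(1) by (cases c) auto
  then have "distinct (vertex (hd c) # rev (map vertex (tl c)))" using c(5) by simp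
  then have "distinct (map vertex ?r)"
    using map_vertex_rev[OF c(3,1) inv] c(4) by simp
  moreover have "leads_to (last ?r) (hd ?r)"
    using c(1,4) inv by (simp add: last_rev hd_rev hd_map last_map)
  moreover have "distinct (map edge ?r)" using map_edge_rev[OF inv] c(6) by simp
  moreover have "set ?r \<subseteq> D" using c(2) by auto
  ultimately show ?thesis
    unfolding is_cycle_iff using c(1) successively_leads_to_rev[OF c(3) inv] by simp
qed

lemma cycle_in_closed_path:
  assumes "xs \<noteq> []" "set xs \<subseteq> D" "successively leads_to xs"
    "successively (\<lambda>x y. y \<noteq> alpha x) xs" "distinct (map vertex xs)"
    "vertex (alpha (last xs)) \<in> vertex ` set xs"
  obtains c where "is_cycle D alpha sigma c" "set c \<subseteq> set xs"
proof -
  obtain i where i: "i < length xs" "vertex (xs ! i) = vertex (alpha (last xs))"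
    using assms(6) by (metis imageE in_set_conv_nth)
  define c where "c = drop i xs"
  have c_ne: "c \<noteq> []" using i(1) unfolding c_def by simp
  have c_sub: "set c \<subseteq> set xs" unfolding c_def by (rule set_drop_subset)
  have "last c = last xs" "hd c = xs ! i"
    unfolding c_def using i(1) by (simp_all add: last_drop hd_drop_conv_nth)
  then have c_closed: "leads_to (last c) (hd c)" using i(2) by simp
  have c_vertices: "distinct (map vertex c)"
    unfolding c_def using assms(5) by (metis distinct_drop drop_map)
  have c_path: "successively leads_to c"
    unfolding c_def using successively_take_drop(2)[OF assms(3)] .
  have "successively (\<lambda>x y. y \<noteq> alpha x) c"
    unfolding c_def using successively_take_drop(2)[OF assms(4)] .
  then have "length c = 2 \<Longrightarrow> c ! 1 \<noteq> alpha (c ! 0)"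
    using successively_nth[of _ c 0] by simp
  then have "distinct (map edge c)"
    using distinct_edges_of_cycle[OF c_ne c_path c_closed c_vertices] by blast
  then have "is_cycle D alpha sigma c" unfolding is_cycle_iff
    using assms(2) c_ne c_sub c_path c_closed c_vertices by blast
  then show thesis using that c_sub by blast
qed

definition chord :: "'a set \<Rightarrow> 'a list \<Rightarrow> bool" where
  "chord F Q \<longleftrightarrow> Q \<noteq> [] \<and> set Q \<subseteq> D \<and> successively leads_to Q \<and> distinct (map vertex Q) \<and>
     vertex (alpha (last Q)) \<notin> vertex ` set Q \<and>
     vertex (hd Q) \<in> vertex ` F \<and> vertex (alpha (last Q)) \<in> vertex ` F \<and>
     vertex ` set (tl Q) \<inter> vertex ` F = {} \<and> (set Q \<union> alpha ` set Q) \<inter> F = {}"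

lemma chord_rev:
  assumes "chord F Q"
  shows "chord F (rev (map alpha Q))"
proof -
  let ?r = "rev (map alpha Q)"
  let ?e = "vertex (alpha (last Q))"
  have Q: "Q \<noteq> []" "set Q \<subseteq> D" "successively leads_to Q" "distinct (map vertex Q)"
    "?e \<notin> vertex ` set Q" "vertex (hd Q) \<in> vertex ` F" "?e \<in> vertex ` F"
    "vertex ` set (tl Q) \<inter> vertex ` F = {}" "(set Q \<union> alpha ` set Q) \<inter> F = {}"
    using assms unfolding chord_def by simp_all
  have inv: "\<forall>x\<in>set Q. alpha (alpha x) = x" using Q(2) by auto
  have Q_split: "Q = hd Q # tl Q" using Q(1) by simp
  have hd_Q: "hd Q \<in> set Q" using Q(1) by simp
  have tl_sub: "set (tl Q) \<subseteq> set Q" by (cases Q) auto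
  have "distinct (vertex (hd Q) # map vertex (tl Q))"
    using Q(4) Q_split by (metis list.simps(9))
  then have hd_new: "vertex (hd Q) \<notin> vertex ` set (tl Q)" and tl_dist: "distinct (map vertex (tl Q))"
    by simp_all
  have e_new: "?e \<notin> vertex ` set (tl Q)" using Q(5) tl_sub by blast
  have hd_ne_e: "vertex (hd Q) \<noteq> ?e" using Q(5) hd_Q by blast
  have vr: "map vertex ?r = ?e # rev (map vertex (tl Q))"
    using map_vertex_rev[OF Q(3,1) inv] .
  have set_r: "vertex ` set ?r = insert ?e (vertex ` set (tl Q))"
    using arg_cong[OF vr, of set] by simp
  have tl_r: "vertex ` set (tl ?r) = vertex ` set (tl Q)"
    using arg_cong[OF vr, of "\<lambda>xs. set (tl xs)"] by (simp add: map_tl[symmetric])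
  have hd_r: "hd ?r = alpha (last Q)" and last_r: "last ?r = alpha (hd Q)"
    using Q(1) by (simp_all add: hd_rev last_rev hd_map last_map)
  have "hd Q \<in> D" using Q(2) hd_Q by blast
  then have end_r: "vertex (alpha (last ?r)) = vertex (hd Q)" using last_r by simp
  have "?r \<noteq> []" using Q(1) by simp
  moreover have "set ?r \<subseteq> D" using Q(2) by auto
  moreover have "successively leads_to ?r" using successively_leads_to_rev[OF Q(3) inv] .
  moreover have "distinct (map vertex ?r)" unfolding vr using e_new tl_dist by simp
  moreover have "vertex (alpha (last ?r)) \<notin> vertex ` set ?r"
    unfolding end_r set_r using hd_ne_e hd_new by blast
  moreover have "set ?r \<union> alpha ` set ?r = alpha ` set Q \<union> set Q"
    using inv by (auto simp: image_image)
  ultimately show ?thesis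
    unfolding chord_def hd_r end_r tl_r using Q(6-9) by (simp add: Un_commute)
qed

lemma chord_append_arc_is_cycle:
  assumes Q: "chord F Q" and F: "F \<subseteq> D" "inj_on vertex F"
    and A: "A \<noteq> []" "set A \<subseteq> F" "distinct A" "successively leads_to A" "distinct (map edge A)"
    and ends: "vertex (hd A) = vertex (alpha (last Q))" "leads_to (last A) (hd Q)"
      "vertex (hd Q) \<notin> vertex ` set A"
  shows "is_cycle D alpha sigma (Q @ A)"
  unfolding is_cycle_iff
proof (intro conjI)
  have Q_props: "Q \<noteq> []" "set Q \<subseteq> D" "successively leads_to Q" "distinct (map vertex Q)"
    "vertex (alpha (last Q)) \<notin> vertex ` set Q" "vertex ` set (tl Q) \<inter> vertex ` F = {}"
    "(set Q \<union> alpha ` set Q) \<inter> F = {}"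
    using Q unfolding chord_def by simp_all
  show "Q @ A \<noteq> []" using A(1) by simp
  show "set (Q @ A) \<subseteq> D" using Q_props(2) A(2) F(1) by auto
  show "successively leads_to (Q @ A)"
    using Q_props(1,3) A(1,4) ends(1) by (simp add: successively_append_iff)
  show "leads_to (last (Q @ A)) (hd (Q @ A))" using Q_props(1) A(1) ends(2) by simp
  have "vertex x \<notin> vertex ` set A" if "x \<in> set Q" for x
  proof (cases "x = hd Q")
    case True
    then show ?thesis using ends(3) by simp
  next
    case False
    then have "x \<in> set (tl Q)" using that Q_props(1) by (cases Q) auto
    moreover have "vertex ` set A \<subseteq> vertex ` F" using A(2) by (rule image_mono)
    ultimately show ?thesis using Q_props(6) by blast
  qed
  moreover have "distinct (map vertex A)"
    using A(2,3) F(2) by (simp add: distinct_map inj_on_subset)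
  ultimately show "distinct (map vertex (Q @ A))" using Q_props(4) by auto
  have "edge x \<noteq> edge a" if "x \<in> set Q" "a \<in> set A" for x a
  proof
    assume "edge x = edge a"
    then have "a = x \<or> a = alpha x" using edge_eq_iff[of x a] by blast
    then show False using that Q_props(7) A(2) by blast
  qed
  moreover have "distinct (map edge Q)"
    using distinct_edges_of_path Q_props(1,3,4,5) by blast
  ultimately show "distinct (map edge (Q @ A))" using A(5) by auto
qed

lemma face_arcs:
  assumes x: "x \<in> D" "inj_on vertex (face alpha sigma x)" "card (face alpha sigma x) \<noteq> 2"
    and y: "y0 \<in> face alpha sigma x" "y1 \<in> face alpha sigma x" "y0 \<noteq> y1"
  obtains T R where "T \<noteq> []" "R \<noteq> []" "hd T = y0" "hd R = y1"
    "leads_to (last T) y1" "leads_to (last R) y0"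
    "set T \<union> set R = face alpha sigma x" "set T \<inter> set R = {}" "distinct T" "distinct R"
    "successively leads_to T" "successively leads_to R"
    "distinct (map edge T)" "distinct (map edge R)"
proof -
  have "y0 \<in> D" using face_subset[OF x(1)] y(1) by blast
  moreover have "face alpha sigma y0 = face alpha sigma x" using face_eq[OF y(1)] .
  ultimately obtain Y where Y: "Y \<noteq> []" "hd Y = y0" "distinct Y" "set Y = face alpha sigma x"
      "successively leads_to Y" "leads_to (last Y) (hd Y)"
    using face_contour by metis
  have "length Y \<noteq> 2" using distinct_card[OF Y(3)] Y(4) x(3) by simp
  moreover have "distinct (map vertex Y)" using Y(3,4) x(2) by (simp add: distinct_map)
  ultimately have Y_edges: "distinct (map edge Y)"
    using distinct_edges_of_cycle Y(1,5,6) by blast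
  obtain k where k: "k < length Y" "Y ! k = y1" using y(2) Y(4) by (metis in_set_conv_nth)
  have "k \<noteq> 0" using k Y(1,2) y(3) by (metis hd_conv_nth)
  define T R where "T = take k Y" and "R = drop k Y"
  have Y_split: "Y = T @ R" unfolding T_def R_def by simp
  have T_ne: "T \<noteq> []" and R_ne: "R \<noteq> []"
    unfolding T_def R_def using k(1) \<open>k \<noteq> 0\<close> Y(1) by simp_all
  have hd_R: "hd R = y1" unfolding R_def using k by (simp add: hd_drop_conv_nth)
  show thesis
  proof
    show "T \<noteq> []" "R \<noteq> []" "hd R = y1" using T_ne R_ne hd_R .
    show "hd T = y0" using Y(2) T_ne Y_split by (metis hd_append2)
    show "leads_to (last T) y1"
      using Y(5) T_ne R_ne hd_R unfolding Y_split successively_append_iff by simp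
    show "leads_to (last R) y0" using Y(2,6) R_ne Y_split by (metis last_appendR)
    show "set T \<union> set R = face alpha sigma x" using Y(4) Y_split by (metis set_append)
    show "set T \<inter> set R = {}" "distinct T" "distinct R"
      using Y(3) unfolding Y_split by simp_all
    show "successively leads_to T" "successively leads_to R"
      unfolding T_def R_def using successively_take_drop[OF Y(5)] .
    show "distinct (map edge T)" "distinct (map edge R)"
      using Y_edges unfolding Y_split by simp_all
  qed
qed

lemma even_degree_continuation:
  assumes H: "H \<subseteq> D" "\<forall>x\<in>H. alpha x \<in> H" and x: "x \<in> H"
    and even: "even (card (H \<inter> vertex (alpha x)))"
  shows "\<exists>y\<in>H. vertex y = vertex (alpha x) \<and> y \<noteq> alpha x"
proof -
  have "alpha x \<in> H \<inter> vertex (alpha x)" using H(2) x orb_self[of "alpha x" sigma] by simp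
  moreover have "finite (H \<inter> vertex (alpha x))" using H(1) finite_darts finite_subset by blast
  ultimately have "H \<inter> vertex (alpha x) \<noteq> {alpha x}" using even by fastforce
  then obtain y where "y \<in> H" "y \<in> vertex (alpha x)" "y \<noteq> alpha x"
    using \<open>alpha x \<in> H \<inter> vertex (alpha x)\<close> by blast
  then show ?thesis using vertex_eq by blast
qed

text \<open>Follow a longest non-backtracking path of H through vertices off F, starting at a
  vertex of F if there is one: it either closes up or ends at another vertex of F.\<close>

lemma cycle_or_chord:
  assumes H: "H \<subseteq> D" "\<forall>x\<in>H. alpha x \<in> H" "H \<inter> F = {}" "H \<noteq> {}"
    and even: "\<forall>v\<in>verts D sigma. v \<notin> vertex ` F \<longrightarrow> even (card (H \<inter> v))"
  shows "(\<exists>c. is_cycle D alpha sigma c \<and> set c \<subseteq> H) \<or> (\<exists>Q. chord F Q \<and> set Q \<subseteq> H)"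
proof -
  obtain x0 where x0: "x0 \<in> H" "(\<exists>x\<in>H. vertex x \<in> vertex ` F) \<Longrightarrow> vertex x0 \<in> vertex ` F"
    using H(4) by blast
  define trail where "trail xs \<longleftrightarrow> xs \<noteq> [] \<and> hd xs = x0 \<and> set xs \<subseteq> H \<and>
      successively leads_to xs \<and> successively (\<lambda>x y. y \<noteq> alpha x) xs \<and>
      distinct (map vertex xs) \<and> vertex ` set (tl xs) \<inter> vertex ` F = {}" for xs
  have "trail [x0]" unfolding trail_def using x0(1) by simp
  moreover have "length xs < Suc (card (verts D sigma))" if "trail xs" for xs
  proof -
    have "set (map vertex xs) \<subseteq> verts D sigma"
      using that H(1) unfolding trail_def verts_def by auto
    then have "card (set (map vertex xs)) \<le> card (verts D sigma)"
      using finite_darts by (simp add: card_mono verts_def)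
    then show ?thesis using that distinct_card unfolding trail_def by fastforce
  qed
  ultimately obtain P where P: "trail P" and P_max: "\<And>xs. trail xs \<Longrightarrow> length xs \<le> length P"
    using ex_has_greatest_nat[of trail "[x0]" length] by metis
  have P_props: "P \<noteq> []" "hd P = x0" "set P \<subseteq> H" "successively leads_to P"
    "successively (\<lambda>x y. y \<noteq> alpha x) P" "distinct (map vertex P)"
    "vertex ` set (tl P) \<inter> vertex ` F = {}"
    using P unfolding trail_def by simp_all
  let ?e = "vertex (alpha (last P))"
  have last_H: "last P \<in> H" using P_props(1,3) last_in_set by blast
  consider (closed) "?e \<in> vertex ` set P"
    | (inner) "?e \<notin> vertex ` set P" "?e \<notin> vertex ` F"
    | (chord) "?e \<notin> vertex ` set P" "?e \<in> vertex ` F"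
    by blast
  then show ?thesis
  proof cases
    case closed
    then obtain c where "is_cycle D alpha sigma c" "set c \<subseteq> set P"
      using cycle_in_closed_path[of P] P_props H(1) by blast
    then show ?thesis using P_props(3) by blast
  next
    case inner
    have "vertex (alpha (last P)) \<in> verts D sigma"
      using last_H H unfolding verts_def by blast
    then obtain y where y: "y \<in> H" "vertex y = ?e" "y \<noteq> alpha (last P)"
      using even_degree_continuation[OF H(1,2) last_H] even inner(2) by blast
    have "tl (P @ [y]) = tl P @ [y]" using P_props(1) by simp
    moreover have "successively leads_to (P @ [y])" "successively (\<lambda>x y. y \<noteq> alpha x) (P @ [y])"
      using P_props(1,4,5) y(2,3) by (simp_all add: successively_append_iff)
    moreover have "distinct (map vertex (P @ [y]))" using P_props(6) y(2) inner(1) by simp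
    moreover have "vertex y \<notin> vertex ` F" using y(2) inner(2) by simp
    ultimately have "trail (P @ [y])"
      unfolding trail_def using P_props(1-3,7) y(1) by auto
    then show ?thesis using P_max[of "P @ [y]"] by simp
  next
    case chord
    have "vertex x0 \<in> vertex ` F" using x0(2) H(2) last_H chord(2) by blast
    moreover have "(set P \<union> alpha ` set P) \<inter> F = {}" using P_props(3) H(2,3) by blast
    ultimately have "chord F P"
      unfolding chord_def using P_props(1-4,6,7) chord H(1) by auto
    then show ?thesis using P_props(3) by blast
  qed
qed

section \<open>Shortest-path trees\<close>

inductive walk :: "'a set \<Rightarrow> nat \<Rightarrow> 'a set \<Rightarrow> bool" for s where
  walk_Nil: "walk s 0 s"
| walk_step: "walk s n (vertex x) \<Longrightarrow> x \<in> D \<Longrightarrow> alpha x \<noteq> x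
        \<Longrightarrow> walk s (Suc n) (vertex (alpha x))"

definition depth :: "'a set \<Rightarrow> 'a set \<Rightarrow> nat" where
  "depth s v = (LEAST n. walk s n v)"

lemma walk_to_vertex:
  assumes "s \<in> verts D sigma" "y \<in> D"
  shows "\<exists>n. walk s n (vertex y)"
proof -
  obtain s0 where s0: "s0 \<in> D" "s = vertex s0" using assms(1) unfolding verts_def by blast
  from connected[OF s0(1) assms(2)] show ?thesis
  proof (induction rule: rtrancl_induct)
    case base
    show ?case using s0 walk_Nil by metis
  next
    case (step y z)
    then obtain n where n: "walk s n (vertex y)" by blast
    from step(2) show ?case
    proof
      assume "(y, z) \<in> {(z, alpha z) | z. z \<in> D}"
      then show ?thesis using n walk_step[OF n] by (cases "alpha y = y") auto
    next
      assume "(y, z) \<in> {(z, sigma z) | z. z \<in> D}"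
      then show ?thesis using n orb_apply[OF permutation_sigma] by auto
    qed
  qed
qed

lemma walk_depth: "s \<in> verts D sigma \<Longrightarrow> y \<in> D \<Longrightarrow> walk s (depth s (vertex y)) (vertex y)"
  unfolding depth_def using walk_to_vertex by (metis LeastI_ex)

lemma depth_le: "walk s n v \<Longrightarrow> depth s v \<le> n"
  unfolding depth_def by (rule Least_le)

lemma walk_0_iff: "walk s 0 v \<longleftrightarrow> v = s"
  by (auto elim: walk.cases intro: walk_Nil)

lemma depth_root: "depth s s = 0"
  using depth_le[OF walk_Nil] by simp

lemma depth_0_iff:
  "s \<in> verts D sigma \<Longrightarrow> y \<in> D \<Longrightarrow> depth s (vertex y) = 0 \<longleftrightarrow> vertex y = s"
  using walk_depth walk_0_iff depth_root by metis

lemma depth_across_edge: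
  assumes "s \<in> verts D sigma" "x \<in> D" "alpha x \<noteq> x"
  shows "depth s (vertex (alpha x)) \<le> Suc (depth s (vertex x))"
  using depth_le walk_step[OF walk_depth[OF assms(1,2)] assms(2,3)] .

lemma parent_dart_exists:
  assumes "s \<in> verts D sigma" "v \<in> verts D sigma" "v \<noteq> s"
  shows "\<exists>x. x \<in> D \<and> alpha x \<noteq> x \<and> vertex (alpha x) = v \<and> Suc (depth s (vertex x)) = depth s v"
proof -
  obtain y where y: "y \<in> D" "v = vertex y" using assms(2) unfolding verts_def by blast
  have "walk s (depth s v) v" using walk_depth[OF assms(1)] y by blast
  then obtain n where n: "depth s v = Suc n"
    using walk_0_iff assms(3) by (cases "depth s v") auto
  from \<open>walk s (depth s v) v\<close>[unfolded n] obtain x where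
    x: "walk s n (vertex x)" "x \<in> D" "alpha x \<noteq> x" "vertex (alpha x) = v"
    by (cases rule: walk.cases) auto
  have "depth s (vertex x) \<le> n" using depth_le x(1) by blast
  moreover have "depth s v \<le> Suc (depth s (vertex x))"
    using depth_across_edge[OF assms(1) x(2,3)] x(4) by simp
  ultimately show ?thesis using x n by (intro exI[of _ x]) auto
qed

definition parent_dart :: "'a set \<Rightarrow> 'a set \<Rightarrow> 'a" where
  "parent_dart s v = (SOME x. x \<in> D \<and> alpha x \<noteq> x \<and> vertex (alpha x) = v \<and>
      Suc (depth s (vertex x)) = depth s v)"

lemma parent_dart:
  assumes "s \<in> verts D sigma" "v \<in> verts D sigma" "v \<noteq> s"
  shows "parent_dart s v \<in> D" "alpha (parent_dart s v) \<noteq> parent_dart s v"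
    "vertex (alpha (parent_dart s v)) = v"
    "Suc (depth s (vertex (parent_dart s v))) = depth s v"
  using someI_ex[OF parent_dart_exists[OF assms]] unfolding parent_dart_def by blast+

end

locale plane_tree = comb_map +
  assumes card_verts: "card (verts D sigma) = card {x\<in>D. alpha x \<noteq> x} div 2 + 1"
begin

text \<open>The parent edges of the vertices other than s are pairwise distinct and, in a
  tree, exactly as numerous as the edges; so every edge is one of them.\<close>

lemma dart_on_parent_edge:
  assumes s: "s \<in> verts D sigma" and y: "y \<in> D" "alpha y \<noteq> y"
  shows "\<exists>u\<in>verts D sigma - {s}. y = parent_dart s u \<or> y = alpha (parent_dart s u)"
proof -
  let ?V = "verts D sigma - {s}"
  let ?N = "{x\<in>D. alpha x \<noteq> x}"
  let ?E = "edge ` ?N"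
  let ?pe = "\<lambda>u. edge (parent_dart s u)"
  have finite_V: "finite (verts D sigma)"
    using finite_darts unfolding verts_def by simp
  have "card ?N = 2 * card ?E"
  proof (rule card_eq_twice_card_edges)
    show "finite ?N" using finite_darts by simp
    show "\<forall>x\<in>?N. alpha x \<in> ?N \<and> alpha x \<noteq> x \<and> alpha (alpha x) = x"
      by auto
  qed
  then have card_V: "card ?V = card ?E"
    using card_verts s finite_V by simp
  have pe_edge: "?pe ` ?V \<subseteq> ?E"
  proof
    fix e assume "e \<in> ?pe ` ?V"
    then obtain u where u: "u \<in> verts D sigma" "u \<noteq> s" and e: "e = ?pe u" by blast
    show "e \<in> ?E" using e parent_dart(1,2)[OF s u] by blast
  qed
  have "inj_on ?pe ?V"
  proof (rule inj_onI)
    fix u v assume "u \<in> ?V" "v \<in> ?V" and e: "?pe u = ?pe v"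
    then have u: "u \<in> verts D sigma" "u \<noteq> s" and v: "v \<in> verts D sigma" "v \<noteq> s"
      by blast+
    note pu = parent_dart[OF s u] and pv = parent_dart[OF s v]
    from e consider "parent_dart s u = parent_dart s v"
      | "parent_dart s u = alpha (parent_dart s v)" "alpha (parent_dart s u) = parent_dart s v"
      using edge_eq_iff by blast
    then show "u = v"
    proof cases
      case 1
      then show ?thesis using pu(3) pv(3) by metis
    next
      case 2
      have "vertex (parent_dart s v) = u" using pu(3) 2(2) by simp
      then have "depth s v = Suc (depth s u)" using pv(4) by simp
      moreover have "vertex (parent_dart s u) = v" using pv(3) 2(1) by simp
      then have "depth s u = Suc (depth s v)" using pu(4) by simp
      ultimately show ?thesis by simp
    qed
  qed
  then have "card (?pe ` ?V) = card ?E" using card_V by (simp add: card_image)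
  then have "?pe ` ?V = ?E" using card_subset_eq[OF _ pe_edge] finite_darts by simp
  moreover have "edge y \<in> ?E" using y by blast
  ultimately have "edge y \<in> ?pe ` ?V" by simp
  then obtain u where "edge y = ?pe u" "u \<in> ?V" by (rule imageE)
  then show ?thesis using edge_eq_iff by blast
qed

lemma deepest_parent_dart_alone:
  assumes s: "s \<in> verts D sigma" and H: "H \<subseteq> {x\<in>D. alpha x \<noteq> x}"
    and v: "v \<in> verts D sigma" "v \<noteq> s"
    and deepest: "\<forall>u\<in>verts D sigma - {s}. parent_dart s u \<in> H \<longrightarrow> depth s u \<le> depth s v"
  shows "H \<inter> v \<subseteq> {alpha (parent_dart s v)}"
proof
  fix y assume y: "y \<in> H \<inter> v"
  then have y_vert: "vertex y = v" using parent_dart(3)[OF s v] vertex_eq by blast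
  obtain u where u: "u \<in> verts D sigma" "u \<noteq> s"
    and y_cases: "y = parent_dart s u \<or> y = alpha (parent_dart s u)"
    using dart_on_parent_edge[OF s] H y by blast
  note pu = parent_dart[OF s u]
  from y_cases show "y \<in> {alpha (parent_dart s v)}"
  proof
    assume y_pu: "y = parent_dart s u"
    then have "depth s u = Suc (depth s v)" using pu(4) y_vert by simp
    moreover have "depth s u \<le> depth s v" using deepest u y y_pu by blast
    ultimately show ?thesis by simp
  next
    assume y_pu: "y = alpha (parent_dart s u)"
    then have "u = v" using pu(3) y_vert by simp
    then show ?thesis using y_pu by simp
  qed
qed

text \<open>An edge set in which only neighbours of the root may have odd degree, and which
  avoids the root, is empty: its edge of maximal depth would end at a vertex of odd
  degree next to the root, so its parent dart would lie in s.\<close>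

lemma subgraph_empty_if_even_degree_away_from_root:
  assumes s: "s \<in> verts D sigma"
    and H: "H \<subseteq> {x\<in>D. alpha x \<noteq> x}" "\<forall>x\<in>H. alpha x \<in> H" "H \<inter> s = {}"
    and even: "\<forall>v\<in>verts D sigma. odd (card (H \<inter> v)) \<longrightarrow> (\<exists>x\<in>v. alpha x \<noteq> x \<and> alpha x \<in> s)"
  shows "H = {}"
proof (rule ccontr)
  assume "H \<noteq> {}"
  let ?p = "parent_dart s"
  define S where "S = {v \<in> verts D sigma - {s}. ?p v \<in> H}"
  have "S \<noteq> {}"
  proof -
    obtain y where y: "y \<in> H" using \<open>H \<noteq> {}\<close> by blast
    then obtain u where u: "u \<in> verts D sigma" "u \<noteq> s" and "y = ?p u \<or> y = alpha (?p u)"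
      using dart_on_parent_edge[OF s] H(1) by blast
    then have "?p u \<in> H" using y H(2) alpha_alpha[OF parent_dart(1)[OF s u]] by metis
    then show ?thesis unfolding S_def using u by blast
  qed
  moreover have "finite S"
    using finite_darts unfolding S_def verts_def by simp
  ultimately have "Max (depth s ` S) \<in> depth s ` S" by simp
  then obtain v where "Max (depth s ` S) = depth s v" and vS: "v \<in> S" by (rule imageE)
  then have v_max: "\<forall>u\<in>S. depth s u \<le> depth s v" using \<open>finite S\<close> by (metis Max_ge finite_imageI imageI)
  have v: "v \<in> verts D sigma" "v \<noteq> s" and pv_H: "?p v \<in> H"
    using vS unfolding S_def by blast+
  note pv = parent_dart[OF s v]
  define a where "a = alpha (?p v)"
  have a: "a \<in> H" "vertex a = v" using pv_H H(2) pv(3) unfolding a_def by blast+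
  have "H \<inter> v \<subseteq> {a}"
    unfolding a_def using deepest_parent_dart_alone[OF s H(1) v] v_max unfolding S_def by blast
  then have "H \<inter> v = {a}" using a orb_self[of a sigma] by auto
  then have "odd (card (H \<inter> v))" by simp
  then obtain x where x: "x \<in> v" "alpha x \<noteq> x" "alpha x \<in> s"
    using even v(1) by blast
  have x_D: "x \<in> D" using x(1) vertex_subset[of a] a(1) H(1) a(2) by blast
  obtain s0 where "s = vertex s0" using s unfolding verts_def by blast
  then have "vertex (alpha x) = s" using x(3) vertex_eq by blast
  moreover have "vertex x = v" using x(1) a(2) vertex_eq by blast
  ultimately have "depth s v \<le> 1"
    using depth_across_edge[OF s alpha_in[OF x_D]] x(2) depth_root x_D by simp
  then have "depth s (vertex (?p v)) = 0" using pv(4) by simp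
  then have "vertex (?p v) = s" using depth_0_iff[OF s pv(1)] by blast
  then show False using pv_H H(3) orb_self[of "?p v" sigma] by blast
qed

end

section \<open>Minimal orientations\<close>

locale oriented_map = comb_map +
  fixes rt :: 'a and inn :: "'a \<Rightarrow> bool"
  assumes root_dart: "rt \<in> D" and minimal: "minimal_orientation D alpha sigma rt inn"
begin

text \<open>The faces on the right of two circuits are closed under crossing any edge, so by
  connectivity they include the root face.\<close>

lemma no_circuit_pair_covering_edges:
  assumes c1: "is_circuit D alpha sigma inn c1" and c2: "is_circuit D alpha sigma inn c2"
    and across: "\<And>z. z \<in> D \<Longrightarrow> edge z \<in> edge ` set c1 \<union> edge ` set c2 \<Longrightarrow>
       face alpha sigma (alpha z) \<in> right_faces D alpha sigma c1 \<union> right_faces D alpha sigma c2"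
  shows False
proof -
  let ?R = "right_faces D alpha sigma c1 \<union> right_faces D alpha sigma c2"
  have c: "c1 \<noteq> []" "set c1 \<subseteq> D"
    using c1 unfolding is_circuit_def is_cycle_def by blast+
  have closed: "face alpha sigma (alpha z) \<in> ?R" if "z \<in> D" "face alpha sigma z \<in> ?R" for z
  proof (cases "edge z \<in> edge ` set c1 \<union> edge ` set c2")
    case True
    then show ?thesis using across that(1) by blast
  next
    case False
    then have "z \<notin> set c1" "alpha z \<notin> set c1" "z \<notin> set c2" "alpha z \<notin> set c2"
      using edge_in_edges_iff[OF that(1)] by blast+
    then show ?thesis using that right_faces_step by blast
  qed
  have "hd c1 \<in> set c1" using c(1) by simp
  then have "face alpha sigma rt \<in> ?R"
    using faces_closed_across_edges[of "hd c1" ?R, OF _ _ closed root_dart] c(2)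
      right_faces_start by blast
  then show False using minimal c1 c2 unfolding minimal_orientation_def by blast
qed

lemma no_two_way_cycle:
  assumes c: "is_cycle D alpha sigma c" and two_way: "\<forall>x\<in>set c. inn x \<and> inn (alpha x)"
  shows False
proof -
  let ?r = "rev (map alpha c)"
  have inv: "\<forall>x\<in>set c. alpha (alpha x) = x" using c unfolding is_cycle_iff by auto
  have "is_circuit D alpha sigma inn c" unfolding is_circuit_def using c two_way by blast
  moreover have "is_circuit D alpha sigma inn ?r"
    unfolding is_circuit_def using is_cycle_rev[OF c] two_way inv by simp
  ultimately show False
  proof (rule no_circuit_pair_covering_edges)
    fix z assume "z \<in> D" "edge z \<in> edge ` set c \<union> edge ` set ?r"
    then have "z \<in> set c \<union> set ?r \<or> alpha z \<in> set c \<union> set ?r"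
      using edge_in_edges_iff by blast
    then have "alpha z \<in> set c \<union> set ?r" using inv by auto
    then show "face alpha sigma (alpha z) \<in>
        right_faces D alpha sigma c \<union> right_faces D alpha sigma ?r"
      using right_faces_start by blast
  qed
qed

lemma chord_append_arc_is_circuit:
  assumes "chord F Q" "F \<subseteq> D" "inj_on vertex F" "\<forall>y\<in>F. inn (alpha y)"
    and two_way: "\<forall>x\<in>set Q. inn x \<and> inn (alpha x)"
    and "A \<noteq> []" "set A \<subseteq> F" "distinct A" "successively leads_to A" "distinct (map edge A)"
    "vertex (hd A) = vertex (alpha (last Q))" "leads_to (last A) (hd Q)"
    "vertex (hd Q) \<notin> vertex ` set A"
  shows "is_circuit D alpha sigma inn (Q @ A)"
  unfolding is_circuit_def
  using chord_append_arc_is_cycle[OF assms(1-3,6-)] assms(4,7) two_way by auto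

lemma boundary_chord_circuits:
  assumes F: "bd \<in> D" "inj_on vertex (face alpha sigma bd)" "card (face alpha sigma bd) \<noteq> 2"
      "\<forall>y\<in>face alpha sigma bd. inn (alpha y)"
    and Q: "chord (face alpha sigma bd) Q" and two_way: "\<forall>x\<in>set Q. inn x \<and> inn (alpha x)"
  obtains T R where "is_circuit D alpha sigma inn (Q @ R)"
    "is_circuit D alpha sigma inn (rev (map alpha Q) @ T)"
    "T \<noteq> []" "R \<noteq> []" "set T \<union> set R = face alpha sigma bd" "set T \<inter> set R = {}"
proof -
  let ?F = "face alpha sigma bd" and ?r = "rev (map alpha Q)"
  have Q_props: "Q \<noteq> []" "set Q \<subseteq> D" "vertex (alpha (last Q)) \<notin> vertex ` set Q"
      "vertex (hd Q) \<in> vertex ` ?F" "vertex (alpha (last Q)) \<in> vertex ` ?F"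
    using Q unfolding chord_def by simp_all
  have F_D: "?F \<subseteq> D" using face_subset[OF F(1)] .
  have inv: "\<forall>x\<in>set Q. alpha (alpha x) = x" using Q_props(2) by auto
  have hd_Q: "hd Q \<in> set Q" and "hd Q \<in> D" using Q_props(1,2) by auto
  obtain y0 where y0: "vertex (hd Q) = vertex y0" "y0 \<in> ?F" using Q_props(4) by (rule imageE)
  obtain y1 where y1: "vertex (alpha (last Q)) = vertex y1" "y1 \<in> ?F"
    using Q_props(5) by (rule imageE)
  have "y0 \<noteq> y1" using y0(1) y1(1) Q_props(3) hd_Q by auto
  then obtain T R where arcs: "T \<noteq> []" "R \<noteq> []" "hd T = y0" "hd R = y1"
      "leads_to (last T) y1" "leads_to (last R) y0"
      "set T \<union> set R = ?F" "set T \<inter> set R = {}" "distinct T" "distinct R"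
      "successively leads_to T" "successively leads_to R"
      "distinct (map edge T)" "distinct (map edge R)"
    using face_arcs[OF F(1-3) y0(2) y1(2)] by blast
  have "y0 \<in> set T" "y1 \<in> set R" using arcs(1-4) hd_in_set by metis+
  then have "y0 \<notin> set R" "y1 \<notin> set T" using arcs(8) by blast+
  then have y0_R: "vertex y0 \<notin> vertex ` set R" and y1_T: "vertex y1 \<notin> vertex ` set T"
    using inj_on_image_mem_iff[OF F(2)] y0(2) y1(2) arcs(7) by blast+
  have hd_r: "hd ?r = alpha (last Q)" and last_r: "last ?r = alpha (hd Q)"
    using Q_props(1) by (simp_all add: hd_rev last_rev hd_map last_map)
  have "is_circuit D alpha sigma inn (Q @ R)"
    by (rule chord_append_arc_is_circuit[OF Q F_D F(2,4) two_way])
      (use arcs y0 y1 y0_R in auto)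
  moreover have "is_circuit D alpha sigma inn (?r @ T)"
    by (rule chord_append_arc_is_circuit[OF chord_rev[OF Q] F_D F(2,4)])
      (use two_way inv arcs y0 y1 y1_T hd_r last_r \<open>hd Q \<in> D\<close> in auto)
  ultimately show thesis using that arcs(1,2,7,8) by blast
qed

lemma no_two_way_chord:
  assumes F: "bd \<in> D" "inj_on vertex (face alpha sigma bd)" "card (face alpha sigma bd) \<noteq> 2"
      "\<forall>y\<in>face alpha sigma bd. inn (alpha y)"
    and Q: "chord (face alpha sigma bd) Q" and two_way: "\<forall>x\<in>set Q. inn x \<and> inn (alpha x)"
  shows False
proof -
  let ?r = "rev (map alpha Q)"
  obtain T R where c1: "is_circuit D alpha sigma inn (Q @ R)"
    and c2: "is_circuit D alpha sigma inn (?r @ T)"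
    and arcs: "T \<noteq> []" "R \<noteq> []" "set T \<union> set R = face alpha sigma bd" "set T \<inter> set R = {}"
    by (rule boundary_chord_circuits[OF F Q two_way])
  have "set Q \<subseteq> D" using Q unfolding chord_def by simp
  then have inv: "\<forall>x\<in>set Q. alpha (alpha x) = x" by auto
  have "hd T \<in> set T" "hd R \<in> set R" using arcs(1,2) by simp_all
  then have "hd T \<in> face alpha sigma bd" "hd R \<in> face alpha sigma bd"
    using arcs(3) by blast+
  then have face_T: "face alpha sigma z = face alpha sigma (hd T)"
    and face_R: "face alpha sigma z = face alpha sigma (hd R)" if "z \<in> face alpha sigma bd" for z
    using face_eq that by simp_all
  show False
  proof (rule no_circuit_pair_covering_edges[OF c1 c2])
    fix z assume z: "z \<in> D" "edge z \<in> edge ` set (Q @ R) \<union> edge ` set (?r @ T)"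
    show "face alpha sigma (alpha z) \<in>
        right_faces D alpha sigma (Q @ R) \<union> right_faces D alpha sigma (?r @ T)"
    proof (cases "alpha z \<in> set (Q @ R) \<union> set (?r @ T)")
      case True
      then show ?thesis using right_faces_start by blast
    next
      case False
      have "z \<in> set (Q @ R) \<union> set (?r @ T)" using z edge_in_edges_iff False by auto
      moreover have "z \<notin> set Q" "z \<notin> set ?r" using False inv by auto
      ultimately consider "z \<in> set R" | "z \<in> set T" by auto
      then show ?thesis
      proof cases
        case 1
        then have "face alpha sigma z = face alpha sigma (hd T)" using face_T arcs(3) by blast
        then have "face alpha sigma z \<in> right_faces D alpha sigma (?r @ T)"
          using arcs(1) right_faces_start[of "hd T" "?r @ T"] by simp
        moreover have "z \<notin> set (?r @ T)" using 1 arcs(4) \<open>z \<notin> set ?r\<close> by auto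
        ultimately show ?thesis using right_faces_step z(1) False by blast
      next
        case 2
        then have "face alpha sigma z = face alpha sigma (hd R)" using face_R arcs(3) by blast
        then have "face alpha sigma z \<in> right_faces D alpha sigma (Q @ R)"
          using arcs(2) right_faces_start[of "hd R" "Q @ R"] by simp
        moreover have "z \<notin> set (Q @ R)" using 2 arcs(4) \<open>z \<notin> set Q\<close> by auto
        ultimately show ?thesis using right_faces_step z(1) False by blast
      qed
    qed
  qed
qed

lemma two_way_even_subgraph_empty:
  assumes F: "bd \<in> D" "inj_on vertex (face alpha sigma bd)" "card (face alpha sigma bd) \<noteq> 2"
      "\<forall>y\<in>face alpha sigma bd. inn (alpha y)"
    and H: "H \<subseteq> D" "\<forall>x\<in>H. alpha x \<in> H \<and> inn x" "H \<inter> face alpha sigma bd = {}"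
    and even: "\<forall>v\<in>verts D sigma. v \<notin> vertex ` face alpha sigma bd \<longrightarrow> even (card (H \<inter> v))"
  shows "H = {}"
proof (rule ccontr)
  assume "H \<noteq> {}"
  have two_way: "\<forall>x\<in>set c. inn x \<and> inn (alpha x)" if "set c \<subseteq> H" for c
    using H(2) that by blast
  have "\<forall>x\<in>H. alpha x \<in> H" using H(2) by blast
  from cycle_or_chord[OF H(1) this H(3) \<open>H \<noteq> {}\<close> even] show False
    using no_two_way_cycle no_two_way_chord[OF F] two_way by blast
qed

end

section \<open>Parity of the weights\<close>

lemma branching_mobile_weights_even:
  assumes M: "branching_mobile p (2 * b) D alpha sigma black w" and x: "x \<in> D" "alpha x \<noteq> x"
  shows "even (w x)"
proof -
  have "cmap_base D alpha sigma" "card (verts D sigma) = card {x\<in>D. alpha x \<noteq> x} div 2 + 1"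
    using M unfolding branching_mobile_def by simp_all
  then interpret plane_tree alpha sigma D by unfold_locales
  have weight: "\<forall>y\<in>D. alpha y \<noteq> y \<longrightarrow>
        (black (vertex y) \<longrightarrow> w y = 0) \<and> (\<not> black (vertex y) \<longrightarrow> 0 < w y)"
    and edge_weight: "\<forall>y\<in>D. alpha y \<noteq> y \<longrightarrow> w y + w (alpha y) = 2 * b - 2"
    using M unfolding branching_mobile_def by simp_all
  have "\<exists>s\<in>verts D sigma. black s \<and> card s = p \<and> (\<forall>y\<in>s. alpha y \<noteq> y) \<and>
        (\<forall>v\<in>verts D sigma. black v \<and> v \<noteq> s \<longrightarrow> card v = 2 * b) \<and>
        (\<forall>v\<in>verts D sigma. \<not> black v \<and> \<not> (\<exists>y\<in>v. alpha y \<noteq> y \<and> alpha y \<in> s)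
           \<longrightarrow> mvwt alpha w v = 2 * b) \<and>
        (\<Sum>v\<in>{vertex (alpha y) | y. y \<in> s}. mvwt alpha w v) = p * (2 * b) - p - 2 * b"
    using M unfolding branching_mobile_def by (elim conjE) assumption
  then obtain s where s: "s \<in> verts D sigma" "black s"
    and white: "\<forall>v\<in>verts D sigma. \<not> black v \<and> \<not> (\<exists>y\<in>v. alpha y \<noteq> y \<and> alpha y \<in> s)
             \<longrightarrow> mvwt alpha w v = 2 * b"
    by blast
  define H where "H = {y\<in>D. alpha y \<noteq> y \<and> odd (w y)}"
  have vertex_of: "vertex y = v" "y \<in> D" if "v \<in> verts D sigma" "y \<in> v" for v y
    using that vertex_eq vertex_subset unfolding verts_def by blast+
  have "H = {}"
  proof (rule subgraph_empty_if_even_degree_away_from_root[OF s(1)])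
    show "H \<subseteq> {x\<in>D. alpha x \<noteq> x}" unfolding H_def by blast
    show "\<forall>y\<in>H. alpha y \<in> H"
    proof
      fix y assume "y \<in> H"
      then have "y \<in> D" "alpha y \<noteq> y" "odd (w y)" unfolding H_def by simp_all
      moreover have "w y + w (alpha y) = 2 * b - 2" using edge_weight calculation by blast
      moreover have "even (2 * b - 2)" by simp
      ultimately have "odd (w (alpha y))" by (metis even_add)
      then show "alpha y \<in> H"
        unfolding H_def using \<open>y \<in> D\<close> \<open>alpha y \<noteq> y\<close> by simp
    qed
    show "H \<inter> s = {}"
    proof (rule ccontr)
      assume "H \<inter> s \<noteq> {}"
      then obtain y where "y \<in> H" "y \<in> s" by blast
      then have "y \<in> D" "alpha y \<noteq> y" "odd (w y)" "black (vertex y)"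
        unfolding H_def using vertex_of[OF s(1)] s(2) by simp_all
      then show False using weight by simp
    qed
    show "\<forall>v\<in>verts D sigma. odd (card (H \<inter> v)) \<longrightarrow> (\<exists>y\<in>v. alpha y \<noteq> y \<and> alpha y \<in> s)"
    proof (intro ballI impI)
      fix v assume v: "v \<in> verts D sigma" and odd_H: "odd (card (H \<inter> v))"
      have "v \<subseteq> D" using vertex_of(2)[OF v] by blast
      then have "finite v" using finite_darts by (rule finite_subset)
      have "H \<inter> v = {y\<in>{y\<in>v. alpha y \<noteq> y}. odd (w y)}"
        unfolding H_def using vertex_of(2)[OF v] by blast
      then have odd_v: "odd (mvwt alpha w v)"
        unfolding mvwt_def using odd_H even_sum_iff[of "{y\<in>v. alpha y \<noteq> y}" w] \<open>finite v\<close>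
        by simp
      have "\<not> black v"
      proof
        assume "black v"
        then have "mvwt alpha w v = 0"
          unfolding mvwt_def using weight vertex_of[OF v] by simp
        then show False using odd_v by simp
      qed
      then show "\<exists>y\<in>v. alpha y \<noteq> y \<and> alpha y \<in> s"
        using white v odd_v by (metis dvd_triv_left)
    qed
  qed
  then show ?thesis using x unfolding H_def by blast
qed

lemma pseudo_orientation_weights_even:
  assumes A: "annular_angulation p d D alpha sigma bd rt" "p \<noteq> 2" "even d"
    and P: "pseudo_orientation d D alpha sigma bd inn w"
    and M: "minimal_orientation D alpha sigma rt inn" and x: "x \<in> D"
  shows "even (w x)"
proof -
  let ?F = "face alpha sigma bd"
  have "cmap_base D alpha sigma" and F: "bd \<in> D" "rt \<in> D" "card ?F = p" "inj_on (orb sigma) ?F"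
    using A(1) unfolding annular_angulation_def is_map_def by simp_all
  then interpret oriented_map alpha sigma D rt inn
    using M by unfold_locales
  have weight: "\<forall>y\<in>D. (inn y \<longrightarrow> 0 < w y) \<and> (\<not> inn y \<longrightarrow> w y = 0)"
    and edge_weight: "\<forall>y\<in>D. w y + w (alpha y) = d - 2"
    and vertex_weight: "\<forall>v\<in>verts D sigma. v \<notin> vertex ` ?F \<longrightarrow> (\<Sum>y\<in>{y\<in>v. inn y}. w y) = d"
    and boundary: "\<forall>y\<in>?F. \<not> inn y \<and> inn (alpha y)"
    using P unfolding pseudo_orientation_def by simp_all
  define H where "H = {y\<in>D. odd (w y)}"
  have "H = {}"
  proof (rule two_way_even_subgraph_empty[OF F(1,4)])
    show "card ?F \<noteq> 2" using F(3) A(2) by simp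
    show "\<forall>y\<in>?F. inn (alpha y)" using boundary by blast
    show "H \<subseteq> D" unfolding H_def by blast
    show "\<forall>y\<in>H. alpha y \<in> H \<and> inn y"
    proof
      fix y assume "y \<in> H"
      then have y: "y \<in> D" "odd (w y)" unfolding H_def by simp_all
      have "w y + w (alpha y) = d - 2" using edge_weight y(1) by blast
      moreover have "even (d - 2)" using A(3) by simp
      ultimately have "odd (w (alpha y))" using y(2) by (metis even_add)
      moreover have "inn y" using weight y by (cases "inn y") auto
      ultimately show "alpha y \<in> H \<and> inn y" unfolding H_def using y(1) by simp
    qed
    show "H \<inter> ?F = {}"
    proof (rule ccontr)
      assume "H \<inter> ?F \<noteq> {}"
      then obtain y where "y \<in> ?F" "odd (w y)" unfolding H_def by blast
      moreover have "y \<in> D" using face_subset[OF F(1)] calculation(1) by blast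
      ultimately show False using boundary weight by fastforce
    qed
    show "\<forall>v\<in>verts D sigma. v \<notin> vertex ` ?F \<longrightarrow> even (card (H \<inter> v))"
    proof (intro ballI impI)
      fix v assume v: "v \<in> verts D sigma" "v \<notin> vertex ` ?F"
      have v_D: "v \<subseteq> D" using v(1) vertex_subset unfolding verts_def by blast
      then have "finite v" using finite_darts by (rule finite_subset)
      have "\<forall>y\<in>v - {y\<in>v. inn y}. w y = 0" using v_D weight by blast
      then have "(\<Sum>y\<in>v. w y) = (\<Sum>y\<in>{y\<in>v. inn y}. w y)"
        by (intro sum.mono_neutral_right[OF \<open>finite v\<close>]) auto
      then have "even (\<Sum>y\<in>v. w y)" using vertex_weight v A(3) by simp
      moreover have "H \<inter> v = {y\<in>v. odd (w y)}" unfolding H_def using v_D by blast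
      ultimately show "even (card (H \<inter> v))" using even_sum_iff[OF \<open>finite v\<close>, of w] by simp
    qed
  qed
  then show ?thesis using x unfolding H_def by blast
qed

theorem proposition23:
  fixes b q :: nat
  assumes "2 \<le> b" and "b \<le> q"
  shows "(\<forall>(D :: 'a set) alpha sigma black (w :: 'a \<Rightarrow> nat).
            branching_mobile (2 * q) (2 * b) D alpha sigma black w \<longrightarrow>
            (\<forall>x\<in>D. alpha x \<noteq> x \<longrightarrow> even (w x)))
       \<and> (\<forall>(D :: 'b set) alpha sigma bd rt inn (w :: 'b \<Rightarrow> nat).
            annular_angulation (2 * q) (2 * b) D alpha sigma bd rt \<and>
            has_girth D alpha sigma (2 * b) \<and>
            pseudo_orientation (2 * b) D alpha sigma bd inn w \<and>
            minimal_orientation D alpha sigma rt inn \<longrightarrow>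
            (\<forall>x\<in>D. even (w x)))"
proof (intro conjI allI impI ballI)
  fix D :: "'a set" and alpha sigma black and w :: "'a \<Rightarrow> nat" and x
  assume "branching_mobile (2 * q) (2 * b) D alpha sigma black w" "x \<in> D" "alpha x \<noteq> x"
  then show "even (w x)" by (rule branching_mobile_weights_even)
next
  fix D :: "'b set" and alpha sigma bd rt inn and w :: "'b \<Rightarrow> nat" and x
  assume "annular_angulation (2 * q) (2 * b) D alpha sigma bd rt \<and>
            has_girth D alpha sigma (2 * b) \<and>
            pseudo_orientation (2 * b) D alpha sigma bd inn w \<and>
            minimal_orientation D alpha sigma rt inn" and "x \<in> D"
  moreover have "2 * q \<noteq> 2" using assms by simp
  ultimately show "even (w x)"
    using pseudo_orientation_weights_even[of "2 * q" "2 * b"] by auto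
qed

end
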